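(* Let $f(x,y)=x^2y$. Let $t>0$ and let $I=[a,a+3t]$ and $J=[b,b+3t]$ be intervals contained in $[\tfrac23,1]$. Then \[ f(I,J) = f(\ddot I,\ddot J), \] where $\ddot I = [a,a+t]\cup[a+2t,a+3t]$ and $\ddot J=[b,b+t]\cup[b+2t,b+3t]$.
   Context: For sets $A,B\subset\mathbb{R}$, $f(A,B)=\{f(x,y):x\in A, y\in B\}$. *)

theory Defs
  imports Complex_Main
begin

definition image2 :: "(real \<Rightarrow> real \<Rightarrow> real) \<Rightarrow> real set \<Rightarrow> real set \<Rightarrow> real set" where
  "image2 f A B = {f x y | x y. x \<in> A \<and> y \<in> B}"

end

theory Submission
  imports Defs
begin

text \<open>On a box \<open>[x\<^sub>1,x\<^sub>2] \<times> [y\<^sub>1,y\<^sub>2]\<close> of positive reals, \<open>x\<^sup>2y\<close> attains every value between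
  \<open>x\<^sub>1\<^sup>2y\<^sub>1\<close> and \<open>x\<^sub>2\<^sup>2y\<^sub>2\<close>, so the image of the box is an interval. Cutting the middle thirds
  out of \<open>I\<close> and \<open>J\<close> leaves four boxes whose image intervals, ordered suitably, overlap
  consecutively; for \<open>I, J \<subseteq> [2/3, 1]\<close> this reduces to three polynomial inequalities, and
  the union of the four intervals is then the whole image interval of \<open>I \<times> J\<close>.\<close>

lemma image2_mono:
  assumes "A \<subseteq> A'" "B \<subseteq> B'"
  shows "image2 f A B \<subseteq> image2 f A' B'"
  using assms unfolding image2_def by blast

lemma image2_Un:
  "image2 f (A \<union> A') (B \<union> B') =
     image2 f A B \<union> image2 f A B' \<union> image2 f A' B \<union> image2 f A' B'"
  unfolding image2_def by blast

lemma x2y_attains_value_in_box: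
  fixes x1 x2 y1 y2 v :: real
  assumes "0 < x1" "x1 \<le> x2" "0 < y1" "y1 \<le> y2" "x1^2 * y1 \<le> v" "v \<le> x2^2 * y2"
  obtains x y where "x \<in> {x1..x2}" "y \<in> {y1..y2}" "v = x^2 * y"
proof (cases "v \<le> x2^2 * y1")
  case True
  define x where "x = sqrt (v / y1)"
  have "x1^2 \<le> v / y1" "v / y1 \<le> x2^2"
    using assms True by (simp_all add: le_divide_eq divide_le_eq)
  then have "sqrt (x1^2) \<le> x" "x \<le> sqrt (x2^2)"
    unfolding x_def by (simp_all only: real_sqrt_le_mono)
  moreover have "x^2 = v / y1"
    unfolding x_def using \<open>x1^2 \<le> v / y1\<close> by (simp add: order_trans[OF zero_le_power2])
  ultimately show ?thesis
    using that[of x y1] assms by simp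
next
  case False
  define y where "y = v / x2^2"
  have "x2^2 > 0"
    using assms by simp
  then have "y1 \<le> y" "y \<le> y2" "v = x2^2 * y"
    unfolding y_def using False assms by (simp_all add: le_divide_eq divide_le_eq mult.commute)
  then show ?thesis
    using that[of x2 y] assms by simp
qed

lemma image2_x2y_box:
  fixes x1 x2 y1 y2 :: real
  assumes "0 < x1" "x1 \<le> x2" "0 < y1" "y1 \<le> y2"
  shows "image2 (\<lambda>x y. x^2 * y) {x1..x2} {y1..y2} = {x1^2 * y1..x2^2 * y2}"
proof
  show "image2 (\<lambda>x y. x^2 * y) {x1..x2} {y1..y2} \<subseteq> {x1^2 * y1..x2^2 * y2}"
    unfolding image2_def using assms by (auto intro!: mult_mono power_mono)
  show "{x1^2 * y1..x2^2 * y2} \<subseteq> image2 (\<lambda>x y. x^2 * y) {x1..x2} {y1..y2}"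
  proof
    fix v assume "v \<in> {x1^2 * y1..x2^2 * y2}"
    then obtain x y where "x \<in> {x1..x2}" "y \<in> {y1..y2}" "v = x^2 * y"
      by (auto intro: x2y_attains_value_in_box[OF assms])
    then show "v \<in> image2 (\<lambda>x y. x^2 * y) {x1..x2} {y1..y2}"
      unfolding image2_def by blast
  qed
qed

lemma interval_covered_by_overlapping_chain:
  fixes l1 l2 l3 l4 u1 u2 u3 u4 :: real
  assumes "l2 \<le> u1" "l3 \<le> u2" "l4 \<le> u3"
  shows "{l1..u4} \<subseteq> {l1..u1} \<union> {l2..u2} \<union> {l3..u3} \<union> {l4..u4}"
  using assms by auto

lemma x2y_overlap_1:
  fixes a b t :: real
  assumes "0 < t" "0 \<le> a" "a \<le> 2 * b"
  shows "a^2 * (b + 2*t) \<le> (a + t)^2 * (b + t)"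
proof -
  have "(a + t)^2 * (b + t) - a^2 * (b + 2*t) = t * (a * (2*b - a) + t * (2*a + b + t))"
    by (simp add: algebra_simps power2_eq_square)
  moreover have "a * (2*b - a) + t * (2*a + b + t) \<ge> 0"
    using assms by simp
  ultimately show ?thesis
    using assms(1) by (metis diff_ge_0_iff_ge zero_le_mult_iff less_imp_le)
qed

lemma x2y_overlap_2:
  fixes a b t :: real
  assumes "0 < t" "0 \<le> a" "2 * b \<le> 3 * a" "b \<le> 2 * a"
  shows "(a + 2*t)^2 * b \<le> (a + t)^2 * (b + 3*t)"
proof -
  have "(a + t)^2 * (b + 3*t) - (a + 2*t)^2 * b = t * (a * (3*a - 2*b) + 3*t * (2*a + t - b))"
    by (simp add: algebra_simps power2_eq_square)
  moreover have "a * (3*a - 2*b) + 3*t * (2*a + t - b) \<ge> 0"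
    using assms by simp
  ultimately show ?thesis
    using assms(1) by (metis diff_ge_0_iff_ge zero_le_mult_iff less_imp_le)
qed

text \<open>Only this overlap uses the full window \<open>[2/3, 1]\<close>: the negative term \<open>-2at\<close> is
  absorbed because \<open>a(2b - a) \<ge> 2/9\<close> while \<open>at \<le> 1/9\<close>.\<close>

lemma x2y_overlap_3:
  fixes a b t :: real
  assumes "0 < t" "2/3 \<le> a" "a + 3*t \<le> 1" "2/3 \<le> b" "b \<le> 1"
  shows "(a + 2*t)^2 * (b + 2*t) \<le> (a + 3*t)^2 * (b + t)"
proof -
  have "a * (2*b - a) \<ge> 2/3 * (1/3)"
    using assms by (intro mult_mono) auto
  moreover have "a * t \<le> 1 * (1/9)"
    using assms by (intro mult_mono) auto
  moreover have "b * t \<ge> 0"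
    using assms by simp
  ultimately have "a * (2*b - a) - 2 * (a * t) + 5 * (b * t) + t^2 \<ge> 0"
    using zero_le_power2[of t] by linarith
  moreover have "(a + 3*t)^2 * (b + t) - (a + 2*t)^2 * (b + 2*t)
      = t * (a * (2*b - a) - 2 * (a * t) + 5 * (b * t) + t^2)"
    by (simp add: algebra_simps power2_eq_square)
  ultimately show ?thesis
    using assms(1) by (metis diff_ge_0_iff_ge zero_le_mult_iff less_imp_le)
qed

theorem lemma3p4:
  fixes a b t :: real
  assumes "t > 0"
    and "{a..a + 3*t} \<subseteq> {2/3..1}"
    and "{b..b + 3*t} \<subseteq> {2/3..1}"
  shows "image2 (\<lambda>x y. x^2 * y) {a..a + 3*t} {b..b + 3*t}
       = image2 (\<lambda>x y. x^2 * y) ({a..a + t} \<union> {a + 2*t..a + 3*t}) ({b..b + t} \<union> {b + 2*t..b + 3*t})"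
    (is "?f {a..a + 3*t} {b..b + 3*t} = ?f ?I ?J")
proof
  have a: "2/3 \<le> a" "a + 3*t \<le> 1" and b: "2/3 \<le> b" "b + 3*t \<le> 1"
    using assms by auto
  show "?f ?I ?J \<subseteq> ?f {a..a + 3*t} {b..b + 3*t}"
    using assms(1) by (intro image2_mono) auto
  have "?f {a..a + 3*t} {b..b + 3*t} = {a^2 * b..(a + 3*t)^2 * (b + 3*t)}"
    using a b assms(1) by (intro image2_x2y_box) auto
  also have "\<dots> \<subseteq> {a^2 * b..(a + t)^2 * (b + t)} \<union> {a^2 * (b + 2*t)..(a + t)^2 * (b + 3*t)}
      \<union> {(a + 2*t)^2 * b..(a + 3*t)^2 * (b + t)}
      \<union> {(a + 2*t)^2 * (b + 2*t)..(a + 3*t)^2 * (b + 3*t)}"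
    using a b assms(1)
    by (intro interval_covered_by_overlapping_chain x2y_overlap_1 x2y_overlap_2 x2y_overlap_3)
      auto
  also have "\<dots> = ?f ?I ?J"
    using a b assms(1) by (simp add: image2_Un image2_x2y_box)
  finally show "?f {a..a + 3*t} {b..b + 3*t} \<subseteq> ?f ?I ?J" .
qed

end
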